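(* Let $X$ be a finite discrete space with at least two elements, $\Gamma$ a nonempty countable set, $\varphi:\Gamma\to\Gamma$ any map, and $\sigma_\varphi:X^\Gamma\to X^\Gamma$ the generalized shift. Then each of the following is equivalent to "$\varphi$ has at least one non-quasi-periodic point": $(X^\Gamma,\sigma_\varphi)$ is $\omega^u_u$-chaotic; it is $\omega^u_\infty$-chaotic; it is $\omega^u_2$-chaotic; it is $\omega^\infty_\infty$-chaotic; it is $\omega^\infty_2$-chaotic.
   Context: $X^\Gamma$ carries the product topology (compact metrizable). The generalized shift is $\sigma_\varphi((x_\alpha)_{\alpha\in\Gamma})=(x_{\varphi(\alpha)})_{\alpha\in\Gamma}$. A point $\theta\in\Gamma$ is quasi-periodic for $\varphi$ if $\{\varphi^n(\theta):n\ge0\}$ is finite; otherwise it is non-quasi-periodic. For a continuous $f:Y\to Y$ on a compact metric space, $Per(f)$ is the set of periodic points, and for $a\in Y$, $\omega_f(a)$ is the set of $z\in Y$ such that $z=\lim_k f^{n_k}(a)$ for some strictly increasing sequence $(n_k)$ of natural numbers. Points $x,y$ are $\omega^u$-scrambled (resp. $\omega^\infty$-scrambled) if $\omega_f(x)\setminus\omega_f(y)$ is uncountable (resp. infinite), $\omega_f(x)\cap\omega_f(y)\neq\varnothing$, and $\omega_f(x)\setminus Per(f)\neq\varnothing$. A set with at least two elements is $\omega^u$- (resp. $\omega^\infty$-) scrambled if every pair of distinct points in it is. $f$ is $\omega^u_u$-, $\omega^u_\infty$-, $\omega^u_2$-chaotic if $Y$ has an uncountable, infinite, resp. at least two-element $\omega^u$-scrambled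 set; $f$ is $\omega^\infty_\infty$-, $\omega^\infty_2$-chaotic if $Y$ has an infinite, resp. at least two-element $\omega^\infty$-scrambled set. *)

theory Defs
  imports "HOL-Analysis.Analysis"
begin

definition prod_space :: "'a set \<Rightarrow> 'b set \<Rightarrow> ('b \<Rightarrow> 'a) topology" where
  "prod_space X G = product_topology (\<lambda>_. discrete_topology X) G"

definition gen_shift :: "'b set \<Rightarrow> ('b \<Rightarrow> 'b) \<Rightarrow> ('b \<Rightarrow> 'a) \<Rightarrow> ('b \<Rightarrow> 'a)" where
  "gen_shift G \<phi> x = (\<lambda>\<alpha>\<in>G. x (\<phi> \<alpha>))"

definition quasi_periodic :: "('b \<Rightarrow> 'b) \<Rightarrow> 'b \<Rightarrow> bool" where
  "quasi_periodic \<phi> \<theta> \<longleftrightarrow> finite {(\<phi> ^^ n) \<theta> | n. True}"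

definition periodic_points :: "'c topology \<Rightarrow> ('c \<Rightarrow> 'c) \<Rightarrow> 'c set" where
  "periodic_points T f = {x \<in> topspace T. \<exists>n>0. (f ^^ n) x = x}"

definition omega_limit :: "'c topology \<Rightarrow> ('c \<Rightarrow> 'c) \<Rightarrow> 'c \<Rightarrow> 'c set" where
  "omega_limit T f a = {z \<in> topspace T. \<exists>r. strict_mono r \<and>
      limitin T (\<lambda>k. (f ^^ r k) a) z sequentially}"

definition omega_u_scrambled :: "'c topology \<Rightarrow> ('c \<Rightarrow> 'c) \<Rightarrow> 'c \<Rightarrow> 'c \<Rightarrow> bool" where
  "omega_u_scrambled T f x y \<longleftrightarrow>
     uncountable (omega_limit T f x - omega_limit T f y) \<and>
     omega_limit T f x \<inter> omega_limit T f y \<noteq> {} \<and>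
     omega_limit T f x - periodic_points T f \<noteq> {}"

definition omega_inf_scrambled :: "'c topology \<Rightarrow> ('c \<Rightarrow> 'c) \<Rightarrow> 'c \<Rightarrow> 'c \<Rightarrow> bool" where
  "omega_inf_scrambled T f x y \<longleftrightarrow>
     infinite (omega_limit T f x - omega_limit T f y) \<and>
     omega_limit T f x \<inter> omega_limit T f y \<noteq> {} \<and>
     omega_limit T f x - periodic_points T f \<noteq> {}"

definition scrambled_set ::
  "('c \<Rightarrow> 'c \<Rightarrow> bool) \<Rightarrow> 'c topology \<Rightarrow> 'c set \<Rightarrow> bool" where
  "scrambled_set P T S \<longleftrightarrow> S \<subseteq> topspace T \<and> (\<exists>x\<in>S. \<exists>y\<in>S. x \<noteq> y) \<and>
     (\<forall>x\<in>S. \<forall>y\<in>S. x \<noteq> y \<longrightarrow> P x y)"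

definition omega_u_u_chaotic :: "'c topology \<Rightarrow> ('c \<Rightarrow> 'c) \<Rightarrow> bool" where
  "omega_u_u_chaotic T f \<longleftrightarrow> (\<exists>S. scrambled_set (omega_u_scrambled T f) T S \<and> uncountable S)"

definition omega_u_inf_chaotic :: "'c topology \<Rightarrow> ('c \<Rightarrow> 'c) \<Rightarrow> bool" where
  "omega_u_inf_chaotic T f \<longleftrightarrow> (\<exists>S. scrambled_set (omega_u_scrambled T f) T S \<and> infinite S)"

definition omega_u_2_chaotic :: "'c topology \<Rightarrow> ('c \<Rightarrow> 'c) \<Rightarrow> bool" where
  "omega_u_2_chaotic T f \<longleftrightarrow> (\<exists>S. scrambled_set (omega_u_scrambled T f) T S)"

definition omega_inf_inf_chaotic :: "'c topology \<Rightarrow> ('c \<Rightarrow> 'c) \<Rightarrow> bool" where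
  "omega_inf_inf_chaotic T f \<longleftrightarrow> (\<exists>S. scrambled_set (omega_inf_scrambled T f) T S \<and> infinite S)"

definition omega_inf_2_chaotic :: "'c topology \<Rightarrow> ('c \<Rightarrow> 'c) \<Rightarrow> bool" where
  "omega_inf_2_chaotic T f \<longleftrightarrow> (\<exists>S. scrambled_set (omega_inf_scrambled T f) T S)"

end

theory Submission
  imports Defs "HOL-Library.Discrete_Functions" "HOL-Library.Nat_Bijection"
begin

(*
  If every point of the index set is quasi-periodic, then in any finite window the coordinates
  of every orbit of the generalized shift are eventually periodic with a common period. Hence two
  omega-limit sets with a common point are nested, and no pair of points is even
  omega-infinity-scrambled.

  Conversely, let the orbit of theta be injective. Along the points that eventually join it, the
  generalized shift acts as the shift on two-sided sequences, which we write with two letters of X.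
  For every c in 2^N we build a binary sequence that contains, arbitrarily late, every finite
  window of every block pattern whose blocks have length i + 1 with i in a set M_c, while all its
  maximal runs of Trues have such lengths; distinct c give incomparable sets M_c. The coded points
  form an uncountable omega-u-scrambled set: the uncountably many block patterns with
  i in M_c - M_c' lie in the omega-limit set of the c-point but not in that of the c'-point, the
  all-False sequence is a common limit, and a pattern with a single block is not periodic.
*)

section \<open>Omega-limit sets in countable products of discrete spaces\<close>

lemma limitin_discrete_topology:
  "limitin (discrete_topology X) f l F \<longleftrightarrow> l \<in> X \<and> eventually (\<lambda>k. f k = l) F"
  unfolding limitin_def by (auto elim: eventually_mono)

lemma topspace_prod_space: "topspace (prod_space X G) = (\<Pi>\<^sub>E \<alpha>\<in>G. X)"
  by (simp add: prod_space_def)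

lemma limitin_prod_space:
  "limitin (prod_space X G) u w F \<longleftrightarrow> w \<in> topspace (prod_space X G) \<and>
     eventually (\<lambda>k. u k \<in> topspace (prod_space X G)) F \<and>
     (\<forall>\<alpha>\<in>G. eventually (\<lambda>k. u k \<alpha> = w \<alpha>) F)"
  unfolding prod_space_def limitin_componentwise limitin_discrete_topology topspace_product_topology
  by (auto simp: PiE_iff)

lemma subseq_limitin_prod_space_iff:
  fixes u :: "nat \<Rightarrow> 'b \<Rightarrow> 'a"
  assumes "countable G"
    and u: "\<And>n. u n \<in> topspace (prod_space X G)" and w: "w \<in> topspace (prod_space X G)"
  shows "(\<exists>r. strict_mono r \<and> limitin (prod_space X G) (u \<circ> r) w sequentially) \<longleftrightarrow>
    (\<forall>F N. finite F \<longrightarrow> F \<subseteq> G \<longrightarrow> (\<exists>n\<ge>N. \<forall>\<alpha>\<in>F. u n \<alpha> = w \<alpha>))"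
proof
  assume "\<exists>r. strict_mono r \<and> limitin (prod_space X G) (u \<circ> r) w sequentially"
  then obtain r where r: "strict_mono r" "\<forall>\<alpha>\<in>G. eventually (\<lambda>k. u (r k) \<alpha> = w \<alpha>) sequentially"
    by (auto simp: limitin_prod_space)
  show "\<forall>F N. finite F \<longrightarrow> F \<subseteq> G \<longrightarrow> (\<exists>n\<ge>N. \<forall>\<alpha>\<in>F. u n \<alpha> = w \<alpha>)"
  proof (intro allI impI)
    fix F N assume "finite F" "F \<subseteq> G"
    then have "eventually (\<lambda>k. k \<ge> N \<and> (\<forall>\<alpha>\<in>F. u (r k) \<alpha> = w \<alpha>)) sequentially"
      using r(2) by (intro eventually_conj eventually_ball_finite) (auto simp: eventually_ge_at_top)
    then obtain k where "k \<ge> N" "\<forall>\<alpha>\<in>F. u (r k) \<alpha> = w \<alpha>"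
      by (auto simp: eventually_sequentially)
    moreover have "k \<le> r k" using r(1) by (rule seq_suble)
    ultimately show "\<exists>n\<ge>N. \<forall>\<alpha>\<in>F. u n \<alpha> = w \<alpha>" by (intro exI[of _ "r k"]) auto
  qed
next
  assume windows: "\<forall>F N. finite F \<longrightarrow> F \<subseteq> G \<longrightarrow> (\<exists>n\<ge>N. \<forall>\<alpha>\<in>F. u n \<alpha> = w \<alpha>)"
  define F where "F k = to_nat_on G -` {..<k} \<inter> G" for k
  have "finite (F k)" for k
    unfolding F_def using inj_on_to_nat_on[OF assms(1)] by (intro finite_vimage_IntI) auto
  then have "\<exists>n>m. \<forall>\<alpha>\<in>F k. u n \<alpha> = w \<alpha>" for k m
    using windows[rule_format, of "F k" "Suc m"] by (auto simp: F_def Suc_le_eq)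
  then obtain r where r: "\<And>k. (\<forall>\<alpha>\<in>F k. u (r k) \<alpha> = w \<alpha>) \<and> r k < r (Suc k)"
    using dependent_nat_choice[of "\<lambda>k n. \<forall>\<alpha>\<in>F k. u n \<alpha> = w \<alpha>" "\<lambda>_ m n. m < n"] by blast
  have "eventually (\<lambda>k. u (r k) \<alpha> = w \<alpha>) sequentially" if "\<alpha> \<in> G" for \<alpha>
    unfolding eventually_sequentially using r that
    by (intro exI[of _ "Suc (to_nat_on G \<alpha>)"]) (auto simp: F_def)
  moreover have "strict_mono r" using r by (simp add: strict_mono_Suc_iff)
  ultimately show "\<exists>r. strict_mono r \<and> limitin (prod_space X G) (u \<circ> r) w sequentially"
    using u w by (auto simp: limitin_prod_space)
qed

lemma omega_limit_prod_space_iff: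
  assumes "countable G" and f: "f ` topspace (prod_space X G) \<subseteq> topspace (prod_space X G)"
    and y: "y \<in> topspace (prod_space X G)"
  shows "w \<in> omega_limit (prod_space X G) f y \<longleftrightarrow> w \<in> topspace (prod_space X G) \<and>
    (\<forall>F N. finite F \<longrightarrow> F \<subseteq> G \<longrightarrow> (\<exists>n\<ge>N. \<forall>\<alpha>\<in>F. (f ^^ n) y \<alpha> = w \<alpha>))"
proof -
  have "(f ^^ n) y \<in> topspace (prod_space X G)" for n
    using f y by (induction n) auto
  then show ?thesis
    using subseq_limitin_prod_space_iff[OF assms(1), of "\<lambda>n. (f ^^ n) y" X w]
    unfolding omega_limit_def by (auto simp: comp_def)
qed

lemma funpow_in_funcset: "\<phi> \<in> G \<rightarrow> G \<Longrightarrow> \<alpha> \<in> G \<Longrightarrow> (\<phi> ^^ n) \<alpha> \<in> G"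
  by (induction n) auto

lemma gen_shift_funpow:
  assumes "\<phi> \<in> G \<rightarrow> G" "\<alpha> \<in> G"
  shows "(gen_shift G \<phi> ^^ n) x \<alpha> = x ((\<phi> ^^ n) \<alpha>)"
  using assms(2)
proof (induction n arbitrary: \<alpha>)
  case (Suc n)
  have "(gen_shift G \<phi> ^^ Suc n) x \<alpha> = (gen_shift G \<phi> ^^ n) x (\<phi> \<alpha>)"
    using Suc.prems by (simp add: gen_shift_def)
  also have "\<dots> = x ((\<phi> ^^ n) (\<phi> \<alpha>))"
    using Suc.IH Suc.prems assms(1) by blast
  finally show ?case by (simp add: funpow_Suc_right del: funpow.simps)
qed simp

lemma gen_shift_funpow_extensional:
  "x \<in> extensional G \<Longrightarrow> (gen_shift G \<phi> ^^ n) x \<in> extensional G"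
  by (cases n) (simp_all add: gen_shift_def)

lemma gen_shift_topspace:
  "\<phi> \<in> G \<rightarrow> G \<Longrightarrow> gen_shift G \<phi> ` topspace (prod_space X G) \<subseteq> topspace (prod_space X G)"
  by (auto simp: topspace_prod_space gen_shift_def)

lemma omega_limit_gen_shift_iff:
  assumes "countable G" "\<phi> \<in> G \<rightarrow> G" "y \<in> topspace (prod_space X G)"
  shows "w \<in> omega_limit (prod_space X G) (gen_shift G \<phi>) y \<longleftrightarrow> w \<in> topspace (prod_space X G) \<and>
    (\<forall>F N. finite F \<longrightarrow> F \<subseteq> G \<longrightarrow> (\<exists>n\<ge>N. \<forall>\<alpha>\<in>F. y ((\<phi> ^^ n) \<alpha>) = w \<alpha>))"
  using omega_limit_prod_space_iff[OF assms(1) gen_shift_topspace[OF assms(2)] assms(3)]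
  by (auto simp: gen_shift_funpow[OF assms(2)] subset_iff)

lemma omega_limit_gen_shiftE:
  assumes "countable G" "\<phi> \<in> G \<rightarrow> G" "y \<in> topspace (prod_space X G)"
    and "w \<in> omega_limit (prod_space X G) (gen_shift G \<phi>) y" "finite F" "F \<subseteq> G"
  obtains n where "n \<ge> N" "\<forall>\<alpha>\<in>F. y ((\<phi> ^^ n) \<alpha>) = w \<alpha>"
  using assms(4-6) omega_limit_gen_shift_iff[OF assms(1-3)] by blast

section \<open>Quasi-periodic points\<close>

lemma funpow_add_apply: "(f ^^ m) ((f ^^ n) x) = (f ^^ (m + n)) x"
  by (simp add: funpow_add)

lemma funpow_eventually_periodic:
  fixes \<phi> :: "'a \<Rightarrow> 'a"
  assumes "(\<phi> ^^ (t + P)) \<alpha> = (\<phi> ^^ t) \<alpha>" "t \<le> n"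
  shows "(\<phi> ^^ (n + l * P)) \<alpha> = (\<phi> ^^ n) \<alpha>"
proof -
  have "(\<phi> ^^ (t + l * P)) \<alpha> = (\<phi> ^^ t) \<alpha>"
  proof (induction l)
    case (Suc l)
    have "(\<phi> ^^ (t + Suc l * P)) \<alpha> = (\<phi> ^^ (l * P)) ((\<phi> ^^ (t + P)) \<alpha>)"
      by (simp add: funpow_add_apply algebra_simps)
    also have "\<dots> = (\<phi> ^^ (l * P)) ((\<phi> ^^ t) \<alpha>)"
      by (simp only: assms(1))
    also have "\<dots> = (\<phi> ^^ (t + l * P)) \<alpha>"
      by (simp add: funpow_add_apply add.commute)
    finally show ?case using Suc.IH by simp
  qed simp
  then have "(\<phi> ^^ (n - t)) ((\<phi> ^^ (t + l * P)) \<alpha>) = (\<phi> ^^ (n - t)) ((\<phi> ^^ t) \<alpha>)"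
    by simp
  then show ?thesis using assms(2) by (simp add: funpow_add_apply)
qed

lemma quasi_periodic_common_period:
  fixes \<phi> :: "'a \<Rightarrow> 'a"
  assumes "finite F" "\<forall>\<alpha>\<in>F. quasi_periodic \<phi> \<alpha>"
  obtains t P where "P > 0" "\<forall>\<alpha>\<in>F. (\<phi> ^^ (t + P)) \<alpha> = (\<phi> ^^ t) \<alpha>"
proof -
  define orbits where "orbits n = restrict (\<lambda>\<alpha>. (\<phi> ^^ n) \<alpha>) F" for n
  have "range orbits \<subseteq> (\<Pi>\<^sub>E \<alpha>\<in>F. {(\<phi> ^^ n) \<alpha> | n. True})"
    by (auto simp: orbits_def)
  moreover have "finite (\<Pi>\<^sub>E \<alpha>\<in>F. {(\<phi> ^^ n) \<alpha> | n. True})"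
    using assms by (intro finite_PiE) (auto simp: quasi_periodic_def)
  ultimately have "finite (range orbits)" by (rule finite_subset)
  then have "\<not> inj orbits"
    using finite_imageD[of orbits UNIV] infinite_UNIV_nat by blast
  then obtain t n where "t < n" "orbits t = orbits n"
    using linorder_injI[of orbits] by metis
  moreover have "(\<phi> ^^ n) \<alpha> = (\<phi> ^^ t) \<alpha>" if "\<alpha> \<in> F" for \<alpha>
    using fun_cong[OF \<open>orbits t = orbits n\<close>, of \<alpha>] that by (simp add: orbits_def)
  ultimately show ?thesis by (intro that[of "n - t" t]) simp_all
qed

lemma inj_orbit_if_not_quasi_periodic:
  fixes \<phi> :: "'a \<Rightarrow> 'a"
  assumes "\<not> quasi_periodic \<phi> \<theta>"
  shows "inj (\<lambda>n. (\<phi> ^^ n) \<theta>)"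
proof (rule linorder_injI, rule notI)
  fix m n :: nat
  assume "m < n" "(\<phi> ^^ m) \<theta> = (\<phi> ^^ n) \<theta>"
  then have period: "(\<phi> ^^ (m + (n - m))) \<theta> = (\<phi> ^^ m) \<theta>" by simp
  have "(\<phi> ^^ k) \<theta> \<in> (\<lambda>k. (\<phi> ^^ k) \<theta>) ` {..<n}" for k
  proof (cases "k < m")
    case False
    define j where "j = m + (k - m) mod (n - m)"
    have "j < n"
      using \<open>m < n\<close> mod_less_divisor[of "n - m" "k - m"] unfolding j_def by linarith
    have "k = j + (k - m) div (n - m) * (n - m)"
      using False mod_div_mult_eq[of "k - m" "n - m"] unfolding j_def by linarith
    then have "(\<phi> ^^ k) \<theta> = (\<phi> ^^ j) \<theta>"
      using funpow_eventually_periodic[OF period, of j "(k - m) div (n - m)"] j_def by simp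
    then show ?thesis using \<open>j < n\<close> by simp
  qed (use \<open>m < n\<close> in auto)
  then have "{(\<phi> ^^ k) \<theta> | k. True} \<subseteq> (\<lambda>k. (\<phi> ^^ k) \<theta>) ` {..<n}" by blast
  then show False using assms finite_subset unfolding quasi_periodic_def by blast
qed

text \<open>In a finite window \<open>F\<close> all coordinates are eventually periodic with a common period
  \<open>P\<close>. The common point \<open>z\<close> is seen by both orbits through the window of all \<open>\<phi>\<^sup>j F\<close>
  with \<open>j < P\<close>; from such a time the orbit of \<open>y\<close> can adjust its phase to match any time at
  which the orbit of \<open>x\<close> sees \<open>w\<close>.\<close>

lemma omega_limit_gen_shift_absorb:
  assumes "countable G" and \<phi>: "\<phi> \<in> G \<rightarrow> G" and qp: "\<forall>\<alpha>\<in>G. quasi_periodic \<phi> \<alpha>"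
    and x: "x \<in> topspace (prod_space X G)" and y: "y \<in> topspace (prod_space X G)"
    and zx: "z \<in> omega_limit (prod_space X G) (gen_shift G \<phi>) x"
    and zy: "z \<in> omega_limit (prod_space X G) (gen_shift G \<phi>) y"
  shows "omega_limit (prod_space X G) (gen_shift G \<phi>) x \<subseteq>
         omega_limit (prod_space X G) (gen_shift G \<phi>) y"
proof
  note omega_y = omega_limit_gen_shift_iff[OF assms(1) \<phi> y]
  fix w assume w: "w \<in> omega_limit (prod_space X G) (gen_shift G \<phi>) x"
  have "\<exists>n\<ge>N. \<forall>\<alpha>\<in>F. y ((\<phi> ^^ n) \<alpha>) = w \<alpha>" if F: "finite F" "F \<subseteq> G" for F N
  proof -
    have "\<forall>\<alpha>\<in>F. quasi_periodic \<phi> \<alpha>" using qp F(2) by blast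
    then obtain t P where P: "P > 0" "\<forall>\<alpha>\<in>F. (\<phi> ^^ (t + P)) \<alpha> = (\<phi> ^^ t) \<alpha>"
      using quasi_periodic_common_period[OF F(1)] by metis
    define F' where "F' = (\<lambda>(\<alpha>, j). (\<phi> ^^ j) \<alpha>) ` (F \<times> {..<P})"
    have F': "finite F'" "F' \<subseteq> G"
      unfolding F'_def using F by (auto intro: funpow_in_funcset[OF \<phi>])
    obtain m where m: "m \<ge> t" "\<forall>\<beta>\<in>F'. x ((\<phi> ^^ m) \<beta>) = z \<beta>"
      by (rule omega_limit_gen_shiftE[OF assms(1) \<phi> x zx F'])
    obtain n where n: "n \<ge> m" "\<forall>\<alpha>\<in>F. x ((\<phi> ^^ n) \<alpha>) = w \<alpha>"
      by (rule omega_limit_gen_shiftE[OF assms(1) \<phi> x w F])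
    obtain m' where m': "m' \<ge> N" "\<forall>\<beta>\<in>F'. y ((\<phi> ^^ m') \<beta>) = z \<beta>"
      by (rule omega_limit_gen_shiftE[OF assms(1) \<phi> y zy F'])
    define j where "j = (n - m) mod P"
    define q where "q = (n - m) div P"
    have "j < P" using P(1) unfolding j_def by simp
    have n_split: "n = m + j + q * P"
      using n(1) mod_div_mult_eq[of "n - m" P] unfolding j_def q_def by linarith
    have "y ((\<phi> ^^ (m' + j)) \<alpha>) = w \<alpha>" if "\<alpha> \<in> F" for \<alpha>
    proof -
      have "(\<phi> ^^ j) \<alpha> \<in> F'"
        using that \<open>j < P\<close> unfolding F'_def by (intro image_eqI[of _ _ "(\<alpha>, j)"]) auto
      then have "y ((\<phi> ^^ (m' + j)) \<alpha>) = x ((\<phi> ^^ (m + j)) \<alpha>)"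
        using m(2) m'(2) by (simp add: funpow_add_apply[symmetric])
      also have "\<dots> = x ((\<phi> ^^ n) \<alpha>)"
        using funpow_eventually_periodic[where \<phi>=\<phi> and t=t and P=P and n="m + j" and l=q]
          P(2) that m(1)
        unfolding n_split by simp
      finally show ?thesis using n(2) that by simp
    qed
    then show ?thesis using m'(1) by (intro exI[of _ "m' + j"]) auto
  qed
  moreover have "w \<in> topspace (prod_space X G)" using w by (simp add: omega_limit_def)
  ultimately show "w \<in> omega_limit (prod_space X G) (gen_shift G \<phi>) y"
    using omega_y[of w] by blast
qed

lemma not_quasi_periodic_if_omega_inf_2_chaotic:
  assumes "countable G" "\<phi> \<in> G \<rightarrow> G"
    and "omega_inf_2_chaotic (prod_space X G) (gen_shift G \<phi>)"
  shows "\<exists>\<theta>\<in>G. \<not> quasi_periodic \<phi> \<theta>"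
proof (rule ccontr)
  assume "\<not> (\<exists>\<theta>\<in>G. \<not> quasi_periodic \<phi> \<theta>)"
  then have qp: "\<forall>\<alpha>\<in>G. quasi_periodic \<phi> \<alpha>" by blast
  obtain x y where "x \<in> topspace (prod_space X G)" "y \<in> topspace (prod_space X G)"
    and scrambled: "omega_inf_scrambled (prod_space X G) (gen_shift G \<phi>) x y"
    using assms(3) unfolding omega_inf_2_chaotic_def scrambled_set_def by blast
  then have "omega_limit (prod_space X G) (gen_shift G \<phi>) x \<subseteq>
             omega_limit (prod_space X G) (gen_shift G \<phi>) y"
    using omega_limit_gen_shift_absorb[OF assms(1,2) qp]
    unfolding omega_inf_scrambled_def by blast
  then show False
    using scrambled unfolding omega_inf_scrambled_def by (metis Diff_eq_empty_iff finite.emptyI)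
qed

section \<open>Sequences along an injective orbit\<close>

text \<open>Let the orbit of \<open>\<theta>\<close> be injective. A point \<open>\<alpha>\<close> that eventually joins it, say
  \<open>\<phi>\<^sup>k \<alpha> = \<phi>\<^sup>m \<theta>\<close>, gets the well-defined level \<open>m - k\<close>; the shift raises levels by one.
  Writing a two-sided sequence along the levels (and \<open>a\<close> elsewhere) therefore
  conjugates the integer shift into the generalized shift.\<close>

definition meets_orbit :: "('b \<Rightarrow> 'b) \<Rightarrow> 'b \<Rightarrow> 'b \<Rightarrow> bool" where
  "meets_orbit \<phi> \<theta> \<alpha> \<longleftrightarrow> (\<exists>k m. (\<phi> ^^ k) \<alpha> = (\<phi> ^^ m) \<theta>)"

definition orbit_level :: "('b \<Rightarrow> 'b) \<Rightarrow> 'b \<Rightarrow> 'b \<Rightarrow> int" where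
  "orbit_level \<phi> \<theta> \<alpha> = (SOME l. \<exists>k m. (\<phi> ^^ k) \<alpha> = (\<phi> ^^ m) \<theta> \<and> l = int m - int k)"

definition embed_seq :: "'b set \<Rightarrow> ('b \<Rightarrow> 'b) \<Rightarrow> 'b \<Rightarrow> 'a \<Rightarrow> (int \<Rightarrow> 'a) \<Rightarrow> 'b \<Rightarrow> 'a" where
  "embed_seq G \<phi> \<theta> a s = (\<lambda>\<alpha>\<in>G. if meets_orbit \<phi> \<theta> \<alpha> then s (orbit_level \<phi> \<theta> \<alpha>) else a)"

lemma orbit_level_eq:
  fixes \<phi> :: "'b \<Rightarrow> 'b"
  assumes inj: "inj (\<lambda>n. (\<phi> ^^ n) \<theta>)" and "(\<phi> ^^ k) \<alpha> = (\<phi> ^^ m) \<theta>"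
  shows "orbit_level \<phi> \<theta> \<alpha> = int m - int k"
proof -
  obtain k' m' where km': "(\<phi> ^^ k') \<alpha> = (\<phi> ^^ m') \<theta>"
    and level: "orbit_level \<phi> \<theta> \<alpha> = int m' - int k'"
    using someI_ex[of "\<lambda>l. \<exists>k m. (\<phi> ^^ k) \<alpha> = (\<phi> ^^ m) \<theta> \<and> l = int m - int k"] assms(2)
    unfolding orbit_level_def by blast
  have "(\<phi> ^^ (k' + m)) \<theta> = (\<phi> ^^ (k + m')) \<theta>"
    using arg_cong[OF assms(2), of "\<phi> ^^ k'"] arg_cong[OF km', of "\<phi> ^^ k"]
    by (simp add: funpow_add_apply add.commute)
  then have "k' + m = k + m'" using inj by (auto dest: injD)
  then show ?thesis using level by linarith
qed

lemma meets_orbit_funpow: "meets_orbit \<phi> \<theta> ((\<phi> ^^ n) \<alpha>) \<longleftrightarrow> meets_orbit \<phi> \<theta> \<alpha>"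
proof
  assume "meets_orbit \<phi> \<theta> ((\<phi> ^^ n) \<alpha>)"
  then obtain k m where "(\<phi> ^^ (k + n)) \<alpha> = (\<phi> ^^ m) \<theta>"
    unfolding meets_orbit_def by (auto simp: funpow_add_apply)
  then show "meets_orbit \<phi> \<theta> \<alpha>" unfolding meets_orbit_def by blast
next
  assume "meets_orbit \<phi> \<theta> \<alpha>"
  then obtain k m where "(\<phi> ^^ k) \<alpha> = (\<phi> ^^ m) \<theta>" unfolding meets_orbit_def by blast
  then have "(\<phi> ^^ k) ((\<phi> ^^ n) \<alpha>) = (\<phi> ^^ (n + m)) \<theta>"
    by (metis funpow_add_apply add.commute)
  then show "meets_orbit \<phi> \<theta> ((\<phi> ^^ n) \<alpha>)" unfolding meets_orbit_def by blast
qed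

lemma orbit_level_funpow:
  fixes \<phi> :: "'b \<Rightarrow> 'b"
  assumes inj: "inj (\<lambda>n. (\<phi> ^^ n) \<theta>)" and "meets_orbit \<phi> \<theta> \<alpha>"
  shows "orbit_level \<phi> \<theta> ((\<phi> ^^ n) \<alpha>) = orbit_level \<phi> \<theta> \<alpha> + int n"
proof -
  obtain k m where km: "(\<phi> ^^ k) \<alpha> = (\<phi> ^^ m) \<theta>"
    using assms(2) unfolding meets_orbit_def by blast
  then have "(\<phi> ^^ k) ((\<phi> ^^ n) \<alpha>) = (\<phi> ^^ (n + m)) \<theta>"
    by (metis funpow_add_apply add.commute)
  then show ?thesis using orbit_level_eq[OF inj] km by simp
qed

lemma embed_seq_in_topspace:
  assumes "a \<in> X" "range s \<subseteq> X"
  shows "embed_seq G \<phi> \<theta> a s \<in> topspace (prod_space X G)"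
  using assms by (auto simp: topspace_prod_space embed_seq_def image_subset_iff)

lemma embed_seq_orbit:
  fixes \<phi> :: "'b \<Rightarrow> 'b"
  assumes "inj (\<lambda>n. (\<phi> ^^ n) \<theta>)" "(\<phi> ^^ p) \<theta> \<in> G"
  shows "embed_seq G \<phi> \<theta> a s ((\<phi> ^^ p) \<theta>) = s (int p)"
proof -
  have "meets_orbit \<phi> \<theta> ((\<phi> ^^ p) \<theta>)"
    unfolding meets_orbit_def by (metis funpow_0)
  moreover have "orbit_level \<phi> \<theta> ((\<phi> ^^ p) \<theta>) = int p"
    using orbit_level_eq[OF assms(1), of 0] by simp
  ultimately show ?thesis using assms(2) by (simp add: embed_seq_def)
qed

lemma gen_shift_funpow_embed_seq:
  fixes \<phi> :: "'b \<Rightarrow> 'b"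
  assumes \<phi>: "\<phi> \<in> G \<rightarrow> G" and inj: "inj (\<lambda>n. (\<phi> ^^ n) \<theta>)"
  shows "(gen_shift G \<phi> ^^ n) (embed_seq G \<phi> \<theta> a s) = embed_seq G \<phi> \<theta> a (\<lambda>z. s (z + int n))"
proof (rule extensionalityI)
  show "(gen_shift G \<phi> ^^ n) (embed_seq G \<phi> \<theta> a s) \<in> extensional G"
    by (intro gen_shift_funpow_extensional) (simp add: embed_seq_def)
  show "embed_seq G \<phi> \<theta> a (\<lambda>z. s (z + int n)) \<in> extensional G"
    by (simp add: embed_seq_def)
  fix \<alpha> assume "\<alpha> \<in> G"
  then show "(gen_shift G \<phi> ^^ n) (embed_seq G \<phi> \<theta> a s) \<alpha> = embed_seq G \<phi> \<theta> a (\<lambda>z. s (z + int n)) \<alpha>"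
    using funpow_in_funcset[OF \<phi> \<open>\<alpha> \<in> G\<close>, of n]
    by (simp add: gen_shift_funpow[OF \<phi>] embed_seq_def meets_orbit_funpow
        orbit_level_funpow[OF inj])
qed

definition recurs_in :: "(int \<Rightarrow> 'a) \<Rightarrow> (int \<Rightarrow> 'a) \<Rightarrow> bool" where
  "recurs_in t s \<longleftrightarrow> (\<forall>j N. \<exists>n\<ge>N. \<forall>z. \<bar>z\<bar> \<le> int j \<longrightarrow> s (z + int n) = t z)"

lemma recurs_in_comp: "recurs_in t s \<Longrightarrow> recurs_in (f \<circ> t) (f \<circ> s)"
  unfolding recurs_in_def by (metis comp_apply)

lemma embed_seq_in_omega_limit:
  fixes \<phi> :: "'b \<Rightarrow> 'b"
  assumes "countable G" and \<phi>: "\<phi> \<in> G \<rightarrow> G" and inj: "inj (\<lambda>n. (\<phi> ^^ n) \<theta>)"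
    and X: "a \<in> X" "range s \<subseteq> X" "range t \<subseteq> X" and "recurs_in t s"
  shows "embed_seq G \<phi> \<theta> a t \<in> omega_limit (prod_space X G) (gen_shift G \<phi>) (embed_seq G \<phi> \<theta> a s)"
  unfolding omega_limit_prod_space_iff[OF assms(1) gen_shift_topspace[OF \<phi>]
      embed_seq_in_topspace[OF X(1,2)]]
proof (intro conjI allI impI embed_seq_in_topspace[OF X(1,3)])
  fix F N assume "finite F" "F \<subseteq> G"
  define j where "j = (\<Sum>\<alpha>\<in>F. nat \<bar>orbit_level \<phi> \<theta> \<alpha>\<bar>)"
  obtain n where n: "n \<ge> N" "\<forall>z. \<bar>z\<bar> \<le> int j \<longrightarrow> s (z + int n) = t z"
    using \<open>recurs_in t s\<close> unfolding recurs_in_def by blast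
  have "\<bar>orbit_level \<phi> \<theta> \<alpha>\<bar> \<le> int j" if "\<alpha> \<in> F" for \<alpha>
  proof -
    have "nat \<bar>orbit_level \<phi> \<theta> \<alpha>\<bar> \<le> j"
      unfolding j_def using \<open>finite F\<close> that by (intro member_le_sum) auto
    then show ?thesis by linarith
  qed
  then have "\<forall>\<alpha>\<in>F. embed_seq G \<phi> \<theta> a (\<lambda>z. s (z + int n)) \<alpha> = embed_seq G \<phi> \<theta> a t \<alpha>"
    using n(2) by (simp add: embed_seq_def)
  then show "\<exists>n\<ge>N. \<forall>\<alpha>\<in>F. (gen_shift G \<phi> ^^ n) (embed_seq G \<phi> \<theta> a s) \<alpha> = embed_seq G \<phi> \<theta> a t \<alpha>"
    using n(1) by (auto simp: gen_shift_funpow_embed_seq[OF \<phi> inj])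
qed

lemma omega_limit_embed_seqD:
  fixes \<phi> :: "'b \<Rightarrow> 'b"
  assumes "countable G" and \<phi>: "\<phi> \<in> G \<rightarrow> G" and "\<theta> \<in> G" and inj: "inj (\<lambda>n. (\<phi> ^^ n) \<theta>)"
    and X: "a \<in> X" "range s \<subseteq> X"
    and "embed_seq G \<phi> \<theta> a t \<in> omega_limit (prod_space X G) (gen_shift G \<phi>) (embed_seq G \<phi> \<theta> a s)"
  shows "\<exists>n\<ge>N. \<forall>p<L. s (int p + int n) = t (int p)"
proof -
  let ?F = "(\<lambda>p. (\<phi> ^^ p) \<theta>) ` {..<L}"
  have orbit: "(\<phi> ^^ p) \<theta> \<in> G" for p using funpow_in_funcset[OF \<phi> \<open>\<theta> \<in> G\<close>] .
  then have "finite ?F" "?F \<subseteq> G" by auto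
  then obtain n where "n \<ge> N"
    and "\<forall>\<alpha>\<in>?F. (gen_shift G \<phi> ^^ n) (embed_seq G \<phi> \<theta> a s) \<alpha> = embed_seq G \<phi> \<theta> a t \<alpha>"
    using assms(7) omega_limit_prod_space_iff[OF assms(1) gen_shift_topspace[OF \<phi>]
        embed_seq_in_topspace[OF X]] by blast
  then show ?thesis
    by (auto simp: gen_shift_funpow_embed_seq[OF \<phi> inj] embed_seq_orbit[OF inj orbit])
qed

lemma periodic_embed_seqD:
  fixes \<phi> :: "'b \<Rightarrow> 'b"
  assumes \<phi>: "\<phi> \<in> G \<rightarrow> G" and "\<theta> \<in> G" and inj: "inj (\<lambda>n. (\<phi> ^^ n) \<theta>)"
    and "embed_seq G \<phi> \<theta> a t \<in> periodic_points (prod_space X G) (gen_shift G \<phi>)"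
  shows "\<exists>P>0. \<forall>p. t (int p + int P) = t (int p)"
proof -
  obtain P where "P > 0" and "(gen_shift G \<phi> ^^ P) (embed_seq G \<phi> \<theta> a t) = embed_seq G \<phi> \<theta> a t"
    using assms(4) unfolding periodic_points_def by blast
  then have "embed_seq G \<phi> \<theta> a (\<lambda>z. t (z + int P)) ((\<phi> ^^ p) \<theta>) = embed_seq G \<phi> \<theta> a t ((\<phi> ^^ p) \<theta>)"
    for p by (simp add: gen_shift_funpow_embed_seq[OF \<phi> inj])
  then show ?thesis
    using \<open>P > 0\<close> funpow_in_funcset[OF \<phi> \<open>\<theta> \<in> G\<close>] by (auto simp: embed_seq_orbit[OF inj])
qed

section \<open>A catalogue of block patterns\<close>

text \<open>On the positive integers, \<open>block_pattern i d\<close> consists of consecutive blocks of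
  \<open>i + 1\<close> Trues, each followed by a single False, where block number \<open>q\<close> is filled in iff
  \<open>d q\<close>; it is False on the non-positive integers.\<close>

definition block_pattern :: "nat \<Rightarrow> (nat \<Rightarrow> bool) \<Rightarrow> int \<Rightarrow> bool" where
  "block_pattern i d z \<longleftrightarrow>
     z \<ge> 1 \<and> d (nat (z - 1) div (i + 2)) \<and> nat (z - 1) mod (i + 2) < i + 1"

lemma mult_add_div_mod: "r < c \<Longrightarrow> (q * c + r) div c = q \<and> (q * c + r) mod c = r"
  for q r c :: nat
  by simp

lemma block_pattern_in_block:
  assumes "p < i + 2"
  shows "block_pattern i d (1 + int (q * (i + 2)) + int p) \<longleftrightarrow> d q \<and> p < i + 1"
proof -
  have pos: "nat (1 + int (q * (i + 2)) + int p - 1) = q * (i + 2) + p" by linarith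
  note div_mod = mult_add_div_mod[OF assms, of q]
  show ?thesis by (simp only: block_pattern_def pos div_mod) simp
qed

lemma block_pattern_block_start: "block_pattern i d (1 + int (q * (i + 2))) = d q"
  using block_pattern_in_block[of 0 i d q] by simp

lemma block_pattern_first_block:
  assumes "d 0"
  shows "\<not> block_pattern i d 0"
    and "1 \<le> p \<Longrightarrow> p \<le> i + 1 \<Longrightarrow> block_pattern i d (int p)"
    and "\<not> block_pattern i d (int i + 2)"
proof -
  show "\<not> block_pattern i d 0" by (simp add: block_pattern_def)
  show "block_pattern i d (int p)" if "1 \<le> p" "p \<le> i + 1"
    using block_pattern_in_block[of "p - 1" i d 0] assms that by (simp add: of_nat_diff)
  show "\<not> block_pattern i d (int i + 2)"
    using block_pattern_in_block[of "i + 1" i d 0] by (simp add: add.commute)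
qed

lemma block_pattern_cong:
  assumes "\<And>q. q < nat z \<Longrightarrow> d q = d' q"
  shows "block_pattern i d z = block_pattern i d' z"
proof (cases "z \<ge> 1")
  case True
  have "nat (z - 1) div (i + 2) < nat z"
    using True div_le_dividend[of "nat (z - 1)" "i + 2"] by linarith
  then show ?thesis using assms by (simp add: block_pattern_def)
qed (simp add: block_pattern_def)

lemma block_pattern_run_start:
  assumes "block_pattern i d x" "\<not> block_pattern i d (x - 1)"
  obtains q where "d q" "x = 1 + int (q * (i + 2))"
proof -
  define q where "q = nat (x - 1) div (i + 2)"
  define r where "r = nat (x - 1) mod (i + 2)"
  have "x \<ge> 1" using assms(1) by (simp add: block_pattern_def)
  moreover have "nat (x - 1) = q * (i + 2) + r"
    unfolding q_def r_def by (rule div_mult_mod_eq[symmetric])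
  ultimately have x: "x = 1 + int (q * (i + 2)) + int r" by linarith
  have "r < i + 2" unfolding r_def by simp
  then have "d q" "r < i + 1" using assms(1) block_pattern_in_block[of r i d q] x by simp_all
  moreover have "r = 0"
  proof (rule ccontr)
    assume "r \<noteq> 0"
    then have x_pred: "x - 1 = 1 + int (q * (i + 2)) + int (r - 1)" using x by simp
    have "block_pattern i d (1 + int (q * (i + 2)) + int (r - 1))"
      using block_pattern_in_block[of "r - 1" i d q] \<open>d q\<close> \<open>r < i + 1\<close> by simp
    then show False using assms(2) unfolding x_pred by blast
  qed
  ultimately show ?thesis using x that by simp
qed

lemma block_pattern_single_block_not_periodic:
  "\<not> (\<exists>P>0. \<forall>p. block_pattern i (\<lambda>q. q = 0) (int p + int P) = block_pattern i (\<lambda>q. q = 0) (int p))"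
proof
  let ?b = "block_pattern i (\<lambda>q. q = 0)"
  assume "\<exists>P>0. \<forall>p. ?b (int p + int P) = ?b (int p)"
  then obtain P where P: "P > 0" "\<And>p. ?b (int p + int P) = ?b (int p)" by blast
  have "?b (int (1 + l * P))" for l
  proof (induction l)
    case 0
    then show ?case using block_pattern_first_block(2)[of "\<lambda>q. q = 0" 1 i] by simp
  next
    case (Suc l)
    have "int (1 + Suc l * P) = int (1 + l * P) + int P" by simp
    then show ?case using P(2) Suc.IH by metis
  qed
  from this[of "i + 2"] have "?b (1 + int (P * (i + 2)))" by (simp add: algebra_simps)
  then show False using block_pattern_block_start[of i "\<lambda>q. q = 0" P] P(1) by simp
qed

text \<open>Slot \<open>k\<close> of \<open>catalogue M\<close> is the interval \<open>[k\<^sup>2, k\<^sup>2 + 2k]\<close>, centred at \<open>k\<^sup>2 + k\<close>. Through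
  the pairing functions, \<open>k\<close> encodes an index \<open>i\<close>, a finite set of blocks and a padding
  component, so that every pair (index, finite set) recurs in arbitrarily late slots. The
  slot carries the centred \<open>block_pattern i\<close> with the encoded blocks if \<open>M i\<close> (truncated to fit
  into the slot), and only Falses otherwise.\<close>

definition slot_index :: "nat \<Rightarrow> nat" where
  "slot_index k = fst (prod_decode (fst (prod_decode k)))"

definition slot_set :: "nat \<Rightarrow> nat set" where
  "slot_set k = set_decode (snd (prod_decode (fst (prod_decode k))))"

definition slot_blocks :: "(nat \<Rightarrow> bool) \<Rightarrow> nat \<Rightarrow> nat \<Rightarrow> bool" where
  "slot_blocks M k q \<longleftrightarrow> M (slot_index k) \<and> q \<in> slot_set k \<and> q < k div (slot_index k + 2)"

definition catalogue :: "(nat \<Rightarrow> bool) \<Rightarrow> int \<Rightarrow> bool" where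
  "catalogue M z \<longleftrightarrow> z \<ge> 0 \<and> (let k = floor_sqrt (nat z) in
     block_pattern (slot_index k) (slot_blocks M k) (z - int (k * k) - int k))"

lemma floor_sqrt_bounds:
  "floor_sqrt n * floor_sqrt n \<le> n" "n \<le> floor_sqrt n * floor_sqrt n + 2 * floor_sqrt n"
proof -
  show "floor_sqrt n * floor_sqrt n \<le> n"
    using floor_sqrt_power2_le[of n] by (simp add: power2_eq_square)
  have "n < Suc (floor_sqrt n) * Suc (floor_sqrt n)"
    using Suc_floor_sqrt_power2_gt[of n] by (simp add: power2_eq_square)
  then show "n \<le> floor_sqrt n * floor_sqrt n + 2 * floor_sqrt n" by simp
qed

lemma catalogue_slot:
  assumes "int (k * k) \<le> z" "z \<le> int (k * k + 2 * k)"
  shows "catalogue M z = block_pattern (slot_index k) (slot_blocks M k) (z - int (k * k) - int k)"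
proof -
  have "k * k \<le> nat z" "nat z \<le> k * k + 2 * k" using assms by linarith+
  then have "floor_sqrt (nat z) = k"
    by (intro floor_sqrt_unique) (auto simp: power2_eq_square)
  moreover have "z \<ge> 0" using assms(1) by linarith
  ultimately show ?thesis unfolding catalogue_def Let_def by simp
qed

lemma recurs_in_catalogue:
  assumes "M i"
  shows "recurs_in (block_pattern i d) (catalogue M)"
  unfolding recurs_in_def
proof (intro allI)
  fix j N :: nat
  define A where "A = {q. q < j \<and> d q}"
  define k where "k = prod_encode (prod_encode (i, set_encode A), N + j * (i + 2))"
  have k: "N + j * (i + 2) \<le> k" unfolding k_def by (rule le_prod_encode_2)
  have "slot_index k = i" and "slot_set k = A"
    unfolding slot_index_def slot_set_def k_def A_def by simp_all
  moreover have "j \<le> k div (i + 2)"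
    using k by (simp add: less_eq_div_iff_mult_less_eq)
  ultimately have blocks: "slot_blocks M k q = d q" if "q < j" for q
    using assms that unfolding slot_blocks_def A_def by auto
  define n where "n = k * k + k"
  have "catalogue M (z + int n) = block_pattern i d z" if z: "\<bar>z\<bar> \<le> int j" for z
  proof -
    have "j \<le> j * (i + 2)" by simp
    then have "j \<le> k" using k by linarith
    then have "int (k * k) \<le> z + int n" "z + int n \<le> int (k * k + 2 * k)"
      using z unfolding n_def by auto
    then have "catalogue M (z + int n) = block_pattern i (slot_blocks M k) z"
      using catalogue_slot[of k "z + int n" M] \<open>slot_index k = i\<close> unfolding n_def by simp
    also have "\<dots> = block_pattern i d z"
    proof (rule block_pattern_cong)
      fix q assume "q < nat z"
      then show "slot_blocks M k q = d q" using blocks z by simp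
    qed
    finally show ?thesis .
  qed
  moreover have "n \<ge> N" using k unfolding n_def by simp
  ultimately show "\<exists>n\<ge>N. \<forall>z. \<bar>z\<bar> \<le> int j \<longrightarrow> catalogue M (z + int n) = block_pattern i d z"
    by blast
qed

lemma recurs_in_catalogue_False: "recurs_in (\<lambda>_. False) (catalogue M)"
  unfolding recurs_in_def
proof (intro allI)
  fix j N :: nat
  define k where "k = 2 * j + N"
  define n where "n = k * k + j"
  have "\<not> catalogue M (z + int n)" if z: "\<bar>z\<bar> \<le> int j" for z
  proof -
    have "int (k * k) \<le> z + int n" "z + int n \<le> int (k * k + 2 * k)"
      using z unfolding n_def k_def by auto
    moreover have "z + int n - int (k * k) - int k < 1" using z unfolding n_def k_def by simp
    ultimately show ?thesis by (simp add: catalogue_slot block_pattern_def)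
  qed
  moreover have "N \<le> n" using le_square[of k] unfolding n_def k_def by linarith
  ultimately show "\<exists>n\<ge>N. \<forall>z. \<bar>z\<bar> \<le> int j \<longrightarrow> catalogue M (z + int n) = False" by blast
qed

text \<open>A maximal run of Trues in \<open>catalogue M\<close> lies inside a single slot, where it is a full
  block of some \<open>block_pattern i\<close> with \<open>M i\<close>.\<close>

lemma catalogue_run:
  assumes "\<not> catalogue M z" "catalogue M (z + 1)"
  obtains i where "M i" "\<forall>p\<le>i. catalogue M (z + 1 + int p)" "\<not> catalogue M (z + int i + 2)"
proof -
  define k where "k = floor_sqrt (nat (z + 1))"
  have "z + 1 \<ge> 0" using assms(2) unfolding catalogue_def by simp
  then have slot_k: "int (k * k) \<le> z + 1" "z + 1 \<le> int (k * k + 2 * k)"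
    using floor_sqrt_bounds[of "nat (z + 1)"] unfolding k_def by linarith+
  define i where "i = slot_index k"
  define d where "d = slot_blocks M k"
  define x where "x = z + 1 - int (k * k) - int k"
  have slot: "catalogue M y = block_pattern i d (y - int (k * k) - int k)"
    if "int (k * k) \<le> y" "y \<le> int (k * k + 2 * k)" for y
    unfolding i_def d_def by (rule catalogue_slot[OF that])
  have "block_pattern i d x" using slot[OF slot_k] assms(2) unfolding x_def by simp
  moreover have "\<not> block_pattern i d (x - 1)"
  proof -
    have "x \<ge> 1" using \<open>block_pattern i d x\<close> by (simp add: block_pattern_def)
    then have "catalogue M z = block_pattern i d (x - 1)"
      using slot[of z] slot_k unfolding x_def by (simp add: algebra_simps)
    then show ?thesis using assms(1) by simp
  qed
  ultimately obtain q where "d q" and x: "x = 1 + int (q * (i + 2))"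
    by (rule block_pattern_run_start)
  then have "M i" and "q < k div (i + 2)" unfolding d_def slot_blocks_def i_def by auto
  then have "(q + 1) * (i + 2) \<le> k"
    using div_times_less_eq_dividend[of k "i + 2"] mult_le_mono1[of "q + 1" "k div (i + 2)" "i + 2"]
    by linarith
  moreover have "x + int i + 1 = int ((q + 1) * (i + 2))" using x by (simp add: algebra_simps)
  ultimately have block_in_slot: "x + int i + 1 \<le> int k" by linarith
  have run: "catalogue M (z + 1 + int p) \<longleftrightarrow> p < i + 1" if "p \<le> i + 1" for p
  proof -
    have "int (k * k) \<le> z + 1 + int p" "z + 1 + int p \<le> int (k * k + 2 * k)"
      using slot_k x block_in_slot that unfolding x_def by linarith+
    then have "catalogue M (z + 1 + int p) = block_pattern i d (1 + int (q * (i + 2)) + int p)"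
      using slot[of "z + 1 + int p"] x unfolding x_def by (simp add: algebra_simps)
    then show ?thesis using block_pattern_in_block[of p i d q] \<open>d q\<close> that by simp
  qed
  show ?thesis
  proof (rule that[OF \<open>M i\<close>])
    show "\<forall>p\<le>i. catalogue M (z + 1 + int p)" using run by simp
    show "\<not> catalogue M (z + int i + 2)" using run[of "i + 1"] by (simp add: algebra_simps)
  qed
qed

lemma catalogue_avoids_block_pattern:
  assumes "\<not> M i" "d 0"
  shows "\<not> (\<forall>p<i + 3. catalogue M (int p + int n) = block_pattern i d (int p))"
proof
  assume match: "\<forall>p<i + 3. catalogue M (int p + int n) = block_pattern i d (int p)"
  note first_block = block_pattern_first_block[where d=d, OF assms(2)]
  have "\<not> catalogue M (int n)"
    using match[rule_format, of 0] first_block(1) by simp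
  moreover have "catalogue M (int n + 1)"
    using match[rule_format, of 1] first_block(2)[of 1] by (simp add: add.commute)
  ultimately obtain i' where "M i'" and run: "\<forall>p\<le>i'. catalogue M (int n + 1 + int p)"
    and end_run: "\<not> catalogue M (int n + int i' + 2)"
    by (rule catalogue_run)
  consider "i' < i" | "i < i'" using \<open>M i'\<close> assms(1) by (cases i' i rule: linorder_cases) auto
  then show False
  proof cases
    case 1
    then have "block_pattern i d (int (i' + 2))" using first_block(2)[of "i' + 2"] by simp
    then show False using match[rule_format, of "i' + 2"] end_run 1 by (simp add: algebra_simps)
  next
    case 2
    then have "catalogue M (int n + 1 + int (i + 1))" using run[rule_format, of "i + 1"] by simp
    then show False
      using match[rule_format, of "i + 2"] first_block(3) by (simp add: algebra_simps)
  qed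
qed

section \<open>Chaos from a non-quasi-periodic point\<close>

lemma uncountable_UNIV_nat_bool: "uncountable (UNIV :: (nat \<Rightarrow> bool) set)"
proof
  assume "countable (UNIV :: (nat \<Rightarrow> bool) set)"
  then have "range (from_nat_into UNIV) = (UNIV :: (nat \<Rightarrow> bool) set)"
    by (simp add: range_from_nat_into)
  then have "(\<lambda>n. \<not> from_nat_into UNIV n n) \<in> range (from_nat_into UNIV)" by simp
  then obtain k where "(\<lambda>n. \<not> from_nat_into UNIV n n) = from_nat_into UNIV k" by blast
  then have "(\<not> from_nat_into UNIV k k) = from_nat_into UNIV k k" by (rule fun_cong)
  then show False by simp
qed

lemma omega_u_u_chaotic_if_scrambled_family:
  fixes x :: "'i \<Rightarrow> 'c"
  assumes "uncountable (UNIV :: 'i set)" and "range x \<subseteq> topspace T"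
    and scrambled: "\<And>c c'. c \<noteq> c' \<Longrightarrow> omega_u_scrambled T f (x c) (x c')"
  shows "omega_u_u_chaotic T f"
proof -
  have distinct: "x c \<noteq> x c'" if "c \<noteq> c'" for c c'
  proof
    assume "x c = x c'"
    then show False using scrambled[OF that] unfolding omega_u_scrambled_def by simp
  qed
  have "inj x"
  proof (rule injI, rule ccontr)
    fix c c' assume "x c = x c'" "c \<noteq> c'"
    then show False using distinct by blast
  qed
  then have uncountable: "uncountable (range x)"
    using assms(1) countable_image_inj_on by blast
  show ?thesis
    unfolding omega_u_u_chaotic_def scrambled_set_def
  proof (intro exI[of _ "range x"] conjI ballI impI)
    show "range x \<subseteq> topspace T" "uncountable (range x)" by fact+
    show "\<exists>y\<in>range x. \<exists>z\<in>range x. y \<noteq> z"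
    proof (rule ccontr)
      assume "\<not> (\<exists>y\<in>range x. \<exists>z\<in>range x. y \<noteq> z)"
      then have "range x \<subseteq> {x undefined}" by blast
      then show False using uncountable countable_subset by blast
    qed
    fix y z assume "y \<in> range x" "z \<in> range x" "y \<noteq> z"
    then obtain c c' where "y = x c" "z = x c'" "c \<noteq> c'" by blast
    then show "omega_u_scrambled T f y z" using scrambled by simp
  qed
qed

text \<open>Distinct \<open>c\<close> yield index sets neither of which contains the other.\<close>

definition index_code :: "(nat \<Rightarrow> bool) \<Rightarrow> nat \<Rightarrow> bool" where
  "index_code c i \<longleftrightarrow> (c (i div 2) \<longleftrightarrow> odd i)"

lemma index_code_separates:
  assumes "c \<noteq> c'"
  obtains i where "index_code c i" "\<not> index_code c' i"
proof -
  obtain q where q: "c q \<noteq> c' q" using assms by blast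
  define i where "i = 2 * q + (if c q then 1 else 0)"
  have "i div 2 = q" "odd i = c q" unfolding i_def by auto
  then have "index_code c i" "\<not> index_code c' i" using q unfolding index_code_def by auto
  then show ?thesis by (rule that)
qed

locale boolean_orbit_coding =
  fixes X :: "'a set" and a b :: 'a and G :: "'b set" and \<phi> :: "'b \<Rightarrow> 'b" and \<theta> :: 'b
  assumes countable: "countable G" and funcset: "\<phi> \<in> G \<rightarrow> G" and base: "\<theta> \<in> G"
    and inj_orbit: "inj (\<lambda>n. (\<phi> ^^ n) \<theta>)"
    and letters: "a \<in> X" "b \<in> X" "a \<noteq> b"
begin

definition letter :: "bool \<Rightarrow> 'a" where
  "letter B = (if B then b else a)"

definition lift :: "(int \<Rightarrow> bool) \<Rightarrow> 'b \<Rightarrow> 'a" where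
  "lift s = embed_seq G \<phi> \<theta> a (letter \<circ> s)"

abbreviation omega :: "('b \<Rightarrow> 'a) \<Rightarrow> ('b \<Rightarrow> 'a) set" where
  "omega y \<equiv> omega_limit (prod_space X G) (gen_shift G \<phi>) y"

lemma range_letter: "range (letter \<circ> s) \<subseteq> X"
  using letters by (auto simp: letter_def)

lemma letter_eq_iff: "letter B = letter B' \<longleftrightarrow> B = B'"
  using letters by (auto simp: letter_def)

lemma lift_in_topspace: "lift s \<in> topspace (prod_space X G)"
  unfolding lift_def by (rule embed_seq_in_topspace[OF letters(1) range_letter])

lemma lift_orbit: "lift s ((\<phi> ^^ p) \<theta>) = letter (s (int p))"
  unfolding lift_def
  by (subst embed_seq_orbit[OF inj_orbit funpow_in_funcset[OF funcset base]]) simp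

lemma lift_in_omega: "recurs_in t s \<Longrightarrow> lift t \<in> omega (lift s)"
  unfolding lift_def
  by (rule embed_seq_in_omega_limit[OF countable funcset inj_orbit letters(1) range_letter
        range_letter recurs_in_comp])

lemma lift_in_omegaD:
  assumes "lift t \<in> omega (lift s)"
  obtains n where "\<forall>p<L. s (int p + int n) = t (int p)"
proof -
  obtain n where "\<forall>p<L. (letter \<circ> s) (int p + int n) = (letter \<circ> t) (int p)"
    using omega_limit_embed_seqD[OF countable funcset base inj_orbit letters(1) range_letter
        assms[unfolded lift_def]] by blast
  then show ?thesis by (intro that) (simp add: letter_eq_iff)
qed

lemma periodic_liftD:
  assumes "lift t \<in> periodic_points (prod_space X G) (gen_shift G \<phi>)"
  shows "\<exists>P>0. \<forall>p. t (int p + int P) = t (int p)"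
proof -
  obtain P where "P > 0" "\<forall>p. (letter \<circ> t) (int p + int P) = (letter \<circ> t) (int p)"
    using periodic_embed_seqD[OF funcset base inj_orbit assms[unfolded lift_def]] by blast
  then show ?thesis by (auto simp: letter_eq_iff)
qed

definition catalogue_point :: "(nat \<Rightarrow> bool) \<Rightarrow> 'b \<Rightarrow> 'a" where
  "catalogue_point c = lift (catalogue (index_code c))"

text \<open>Block 0 is always filled in, so every pattern point begins with a maximal run of exactly
  \<open>i + 1\<close> Trues, which the catalogues of other index sets never contain.\<close>

definition pattern_point :: "nat \<Rightarrow> (nat \<Rightarrow> bool) \<Rightarrow> 'b \<Rightarrow> 'a" where
  "pattern_point i e = lift (block_pattern i (case_nat True e))"

lemma inj_pattern_point: "inj (pattern_point i)"
proof (rule injI, rule ext)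
  fix e e' q assume "pattern_point i e = pattern_point i e'"
  define p where "p = 1 + Suc q * (i + 2)"
  have "lift (block_pattern i (case_nat True e)) ((\<phi> ^^ p) \<theta>) =
        lift (block_pattern i (case_nat True e')) ((\<phi> ^^ p) \<theta>)"
    using \<open>pattern_point i e = pattern_point i e'\<close> unfolding pattern_point_def by simp
  moreover have "int p = 1 + int (Suc q * (i + 2))" unfolding p_def by simp
  ultimately have "case_nat True e (Suc q) = case_nat True e' (Suc q)"
    by (simp only: lift_orbit letter_eq_iff block_pattern_block_start)
  then show "e q = e' q" by simp
qed

lemma pattern_point_in_omega:
  "index_code c i \<Longrightarrow> pattern_point i e \<in> omega (catalogue_point c)"
  unfolding pattern_point_def catalogue_point_def by (intro lift_in_omega recurs_in_catalogue)

lemma pattern_point_notin_omega: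
  assumes "\<not> index_code c i"
  shows "pattern_point i e \<notin> omega (catalogue_point c)"
proof
  assume "pattern_point i e \<in> omega (catalogue_point c)"
  then obtain n where
    "\<forall>p<i + 3. catalogue (index_code c) (int p + int n) = block_pattern i (case_nat True e) (int p)"
    unfolding pattern_point_def catalogue_point_def by (rule lift_in_omegaD)
  then show False
    using catalogue_avoids_block_pattern[of "index_code c" i "case_nat True e" n] assms by simp
qed

lemma lift_False_in_omega: "lift (\<lambda>_. False) \<in> omega (catalogue_point c)"
  unfolding catalogue_point_def by (intro lift_in_omega recurs_in_catalogue_False)

lemma single_pattern_point_not_periodic:
  "pattern_point i (\<lambda>_. False) \<notin> periodic_points (prod_space X G) (gen_shift G \<phi>)"
proof
  have "case_nat True (\<lambda>_. False) = (\<lambda>q. q = 0)" by (auto simp: fun_eq_iff split: nat.split)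
  moreover assume "pattern_point i (\<lambda>_. False) \<in> periodic_points (prod_space X G) (gen_shift G \<phi>)"
  ultimately have "\<exists>P>0. \<forall>p. block_pattern i (\<lambda>q. q = 0) (int p + int P) =
      block_pattern i (\<lambda>q. q = 0) (int p)"
    unfolding pattern_point_def by (metis periodic_liftD)
  then show False using block_pattern_single_block_not_periodic by blast
qed

lemma omega_u_u_chaotic: "omega_u_u_chaotic (prod_space X G) (gen_shift G \<phi>)"
proof (rule omega_u_u_chaotic_if_scrambled_family[OF uncountable_UNIV_nat_bool])
  show "range catalogue_point \<subseteq> topspace (prod_space X G)"
    by (auto simp: catalogue_point_def lift_in_topspace)
  fix c c' :: "nat \<Rightarrow> bool" assume "c \<noteq> c'"
  then obtain i where i: "index_code c i" "\<not> index_code c' i" by (rule index_code_separates)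
  have "range (pattern_point i) \<subseteq> omega (catalogue_point c) - omega (catalogue_point c')"
    using pattern_point_in_omega[OF i(1)] pattern_point_notin_omega[OF i(2)] by blast
  moreover have "uncountable (range (pattern_point i))"
    using inj_pattern_point uncountable_UNIV_nat_bool countable_image_inj_on by blast
  ultimately have "uncountable (omega (catalogue_point c) - omega (catalogue_point c'))"
    using countable_subset by blast
  moreover have "lift (\<lambda>_. False) \<in> omega (catalogue_point c) \<inter> omega (catalogue_point c')"
    using lift_False_in_omega by blast
  moreover have "pattern_point i (\<lambda>_. False) \<in>
      omega (catalogue_point c) - periodic_points (prod_space X G) (gen_shift G \<phi>)"
    using pattern_point_in_omega[OF i(1)] single_pattern_point_not_periodic by blast
  ultimately show
    "omega_u_scrambled (prod_space X G) (gen_shift G \<phi>) (catalogue_point c) (catalogue_point c')"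
    unfolding omega_u_scrambled_def by blast
qed

end

lemma omega_u_u_chaotic_if_not_quasi_periodic:
  assumes "countable G" "\<phi> \<in> G \<rightarrow> G" "\<theta> \<in> G" "\<not> quasi_periodic \<phi> \<theta>"
    and "a \<in> X" "b \<in> X" "a \<noteq> b"
  shows "omega_u_u_chaotic (prod_space X G) (gen_shift G \<phi>)"
proof -
  interpret boolean_orbit_coding X a b G \<phi> \<theta>
    using assms inj_orbit_if_not_quasi_periodic by unfold_locales auto
  show ?thesis by (rule omega_u_u_chaotic)
qed

section \<open>Comparing the notions of chaos\<close>

lemma omega_u_scrambled_imp_omega_inf_scrambled:
  assumes "omega_u_scrambled T f x y"
  shows "omega_inf_scrambled T f x y"
proof -
  have "infinite (omega_limit T f x - omega_limit T f y)"
    using assms unfolding omega_u_scrambled_def by (meson uncountable_infinite)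
  then show ?thesis using assms unfolding omega_u_scrambled_def omega_inf_scrambled_def by blast
qed

lemma scrambled_set_mono:
  assumes "\<And>x y. P x y \<Longrightarrow> Q x y" "scrambled_set P T S"
  shows "scrambled_set Q T S"
  using assms unfolding scrambled_set_def by blast

lemma omega_chaotic_implications:
  shows "omega_u_u_chaotic T f \<Longrightarrow> omega_u_inf_chaotic T f"
    and "omega_u_inf_chaotic T f \<Longrightarrow> omega_u_2_chaotic T f"
    and "omega_u_inf_chaotic T f \<Longrightarrow> omega_inf_inf_chaotic T f"
    and "omega_u_2_chaotic T f \<Longrightarrow> omega_inf_2_chaotic T f"
    and "omega_inf_inf_chaotic T f \<Longrightarrow> omega_inf_2_chaotic T f"
  unfolding omega_u_u_chaotic_def omega_u_inf_chaotic_def omega_u_2_chaotic_def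
    omega_inf_inf_chaotic_def omega_inf_2_chaotic_def
  by (metis uncountable_infinite scrambled_set_mono omega_u_scrambled_imp_omega_inf_scrambled)+

theorem theorem3p7:
  fixes X :: "'a set" and G :: "'b set" and \<phi> :: "'b \<Rightarrow> 'b"
  assumes "finite X" and "card X \<ge> 2"
    and "countable G" and "G \<noteq> {}"
    and "\<phi> \<in> G \<rightarrow> G"
  defines "T \<equiv> prod_space X G" and "\<sigma> \<equiv> gen_shift G \<phi>"
  shows "((\<exists>\<theta>\<in>G. \<not> quasi_periodic \<phi> \<theta>) \<longleftrightarrow> omega_u_u_chaotic T \<sigma>) \<and>
         ((\<exists>\<theta>\<in>G. \<not> quasi_periodic \<phi> \<theta>) \<longleftrightarrow> omega_u_inf_chaotic T \<sigma>) \<and>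
         ((\<exists>\<theta>\<in>G. \<not> quasi_periodic \<phi> \<theta>) \<longleftrightarrow> omega_u_2_chaotic T \<sigma>) \<and>
         ((\<exists>\<theta>\<in>G. \<not> quasi_periodic \<phi> \<theta>) \<longleftrightarrow> omega_inf_inf_chaotic T \<sigma>) \<and>
         ((\<exists>\<theta>\<in>G. \<not> quasi_periodic \<phi> \<theta>) \<longleftrightarrow> omega_inf_2_chaotic T \<sigma>)"
proof -
  obtain a B where "X = insert a B" "a \<notin> B" "1 \<le> card B"
    using assms(2) card_le_Suc_iff[of 1 X] by (auto simp: numeral_2_eq_2)
  then obtain b where ab: "a \<in> X" "b \<in> X" "a \<noteq> b"
    by (metis card.empty ex_in_conv insertCI not_one_le_zero)
  have "omega_u_u_chaotic T \<sigma>" if non_qp: "\<exists>\<theta>\<in>G. \<not> quasi_periodic \<phi> \<theta>"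
  proof -
    obtain \<theta> where "\<theta> \<in> G" "\<not> quasi_periodic \<phi> \<theta>" using non_qp by blast
    then show ?thesis unfolding T_def \<sigma>_def
      by (rule omega_u_u_chaotic_if_not_quasi_periodic[OF assms(3,5) _ _ ab])
  qed
  moreover have "\<exists>\<theta>\<in>G. \<not> quasi_periodic \<phi> \<theta>" if "omega_inf_2_chaotic T \<sigma>"
    using that unfolding T_def \<sigma>_def
    by (rule not_quasi_periodic_if_omega_inf_2_chaotic[OF assms(3,5)])
  ultimately show ?thesis
    using omega_chaotic_implications[of T \<sigma>] by blast
qed

end
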